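(* Let $y\in\mathbb{R}^{k+1}$, $y\neq0$, let $T$ be any point on the line through the origin $O$ and $y$ with $T\neq y$, and let $\delta=|T-y|$. Then $$\omega(x,y)=\frac{|T|}{\delta}\quad\text{for all } x \text{ with } |x-T|=\delta,\ x\neq y .$$
   Context: For $x\neq y$ in $\mathbb{R}^{k+1}$, the spherical ratio of two points is $\omega(x,y)=\left|\dfrac{|x|^2-|y|^2}{|x-y|^2}\right|$; $|T|=|OT|$ is the distance from the origin to $T$. *)

theory Defs
  imports "HOL-Analysis.Analysis"
begin

definition spherical_ratio :: "'a::real_normed_vector \<Rightarrow> 'a \<Rightarrow> real" where
  "spherical_ratio x y = \<bar>(norm x ^ 2 - norm y ^ 2) / (norm (x - y) ^ 2)\<bar>"

end

theory Submission
  imports Defs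
begin

text \<open>If x lies on the sphere centred at T = t y through y, expanding the
  defining equation in inner products gives
  norm x^2 - norm y^2 = 2t (x \<bullet> y - y \<bullet> y) and
  norm (x - y)^2 = 2(t - 1)(x \<bullet> y - y \<bullet> y); hence the two squared
  quantities in the spherical ratio are in the fixed proportion t : (t - 1),
  and the ratio equals |t| / |t - 1| = |T| / |T - y|.\<close>

lemma sphere_through_point_norm_diff_proportional:
  fixes x y :: "'a::real_inner"
  assumes "norm (x - t *\<^sub>R y) = norm (t *\<^sub>R y - y)"
  shows "(t - 1) * (norm x ^ 2 - norm y ^ 2) = t * norm (x - y) ^ 2"
proof -
  have "norm (x - t *\<^sub>R y) ^ 2 = norm (t *\<^sub>R y - y) ^ 2"
    using assms by simp
  then have sphere: "x \<bullet> x = 2 * t * (x \<bullet> y) - (2 * t - 1) * (y \<bullet> y)"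
    unfolding power2_norm_eq_inner
    by (simp add: inner_diff_left inner_diff_right inner_commute algebra_simps power2_eq_square)
  show ?thesis
    unfolding power2_norm_eq_inner
    by (simp add: inner_diff_left inner_diff_right inner_commute sphere algebra_simps)
qed

lemma spherical_ratio_eq_if_proportional:
  fixes x y :: "'a::real_normed_vector"
  assumes "(t - 1) * (norm x ^ 2 - norm y ^ 2) = t * norm (x - y) ^ 2"
    and "t \<noteq> 1" and "x \<noteq> y"
  shows "spherical_ratio x y = \<bar>t\<bar> / \<bar>t - 1\<bar>"
proof -
  have "norm x ^ 2 - norm y ^ 2 = t / (t - 1) * norm (x - y) ^ 2"
    using assms(1,2) by (simp add: field_simps)
  then show ?thesis
    using assms(3) by (simp add: spherical_ratio_def abs_divide)
qed

theorem lemma1: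
  fixes y T x :: "'a::euclidean_space" and t :: real
  assumes "y \<noteq> 0"
    and "T = t *\<^sub>R y"
    and "T \<noteq> y"
    and "norm (x - T) = norm (T - y)"
    and "x \<noteq> y"
  shows "spherical_ratio x y = norm T / norm (T - y)"
proof -
  have "t \<noteq> 1"
    using assms(2,3) by auto
  moreover have "(t - 1) * (norm x ^ 2 - norm y ^ 2) = t * norm (x - y) ^ 2"
    using assms(2,4) by (simp add: sphere_through_point_norm_diff_proportional)
  ultimately have "spherical_ratio x y = \<bar>t\<bar> / \<bar>t - 1\<bar>"
    using assms(5) by (intro spherical_ratio_eq_if_proportional)
  also have "\<dots> = norm T / norm (T - y)"
  proof -
    have "T - y = (t - 1) *\<^sub>R y"
      using assms(2) by (simp add: algebra_simps)
    then show ?thesis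
      using assms(1,2) by simp
  qed
  finally show ?thesis .
qed

end
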